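(* Let $(\eta_t)$ be an irreducible continuous-time Markov chain on a finite set $E$ with jump rates $R(\eta,\xi)$ and invariant probability $\mu$. Let $R^s(\eta,\xi)=\tfrac12\{R(\eta,\xi)+\mu(\xi)R(\xi,\eta)/\mu(\eta)\}$ be the rates of the reversible chain, and denote by $\mathrm{Cap}$ and $\mathrm{Cap}^s$ the capacities with respect to the original and the reversible chain. Then for any two disjoint nonempty subsets $A,B$ of $E$, $$\mathrm{Cap}^s(A,B)\le\mathrm{Cap}(A,B)\le2|E|\,\mathrm{Cap}^s(A,B).$$
   Context: For a chain on $E$ with rates $Q(\eta,\xi)$, holding rates $\lambda(\eta)=\sum_{\xi\ne\eta}Q(\eta,\xi)$ and invariant probability $\mu$, the capacity between disjoint nonempty $A,B$ is $\sum_{\eta\in A}\mu(\eta)\lambda(\eta)\mathbb P_\eta[H_B<H^+_A]$, where $H_B=\inf\{t>0:\eta_t\in B\}$, $H^+_A=\inf\{t>\tau_1:\eta_t\in A\}$ and $\tau_1$ is the first jump time. (The reversible chain with rates $R^s$ has $\mu$ as reversible invariant measure.) *)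

theory Defs
  imports Complex_Main
begin

text \<open>Continuous-time Markov chain on a finite state set E with rates Q x y (x \<noteq> y);
  diagonal values of Q are ignored.\<close>

definition hold_rate :: "'a set \<Rightarrow> ('a \<Rightarrow> 'a \<Rightarrow> real) \<Rightarrow> 'a \<Rightarrow> real" where
  "hold_rate E Q x = (\<Sum>y\<in>E - {x}. Q x y)"

definition jump_prob :: "'a set \<Rightarrow> ('a \<Rightarrow> 'a \<Rightarrow> real) \<Rightarrow> 'a \<Rightarrow> 'a \<Rightarrow> real" where
  "jump_prob E Q x y = (if y = x then 0 else Q x y / hold_rate E Q x)"

fun path_weight :: "'a set \<Rightarrow> ('a \<Rightarrow> 'a \<Rightarrow> real) \<Rightarrow> 'a list \<Rightarrow> real" where
  "path_weight E Q (x # y # rest) = jump_prob E Q x y * path_weight E Q (y # rest)"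
| "path_weight E Q _ = 1"

text \<open>P_x[H_B < H_A^+]: the chain started at x, after its first jump, enters B at
  jump number n+1 without having visited A \<union> B at jumps 1..n. Summed over n.\<close>
definition escape_prob :: "'a set \<Rightarrow> ('a \<Rightarrow> 'a \<Rightarrow> real) \<Rightarrow> 'a set \<Rightarrow> 'a set \<Rightarrow> 'a \<Rightarrow> real" where
  "escape_prob E Q A B x =
     (\<Sum>n. \<Sum>xs\<in>{xs. length xs = Suc n \<and> set xs \<subseteq> E \<and> last xs \<in> B \<and>
                         (\<forall>i<n. xs ! i \<notin> A \<union> B)}.
            path_weight E Q (x # xs))"

definition capacity ::
  "'a set \<Rightarrow> ('a \<Rightarrow> 'a \<Rightarrow> real) \<Rightarrow> ('a \<Rightarrow> real) \<Rightarrow> 'a set \<Rightarrow> 'a set \<Rightarrow> real" where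
  "capacity E Q \<mu> A B = (\<Sum>x\<in>A. \<mu> x * hold_rate E Q x * escape_prob E Q A B x)"

definition reversible_rates :: "('a \<Rightarrow> 'a \<Rightarrow> real) \<Rightarrow> ('a \<Rightarrow> real) \<Rightarrow> 'a \<Rightarrow> 'a \<Rightarrow> real" where
  "reversible_rates R \<mu> x y = (R x y + \<mu> y * R y x / \<mu> x) / 2"

definition irreducible :: "'a set \<Rightarrow> ('a \<Rightarrow> 'a \<Rightarrow> real) \<Rightarrow> bool" where
  "irreducible E Q \<longleftrightarrow>
     (\<forall>x\<in>E. \<forall>y\<in>E. (x, y) \<in> {(u, v). u \<in> E \<and> v \<in> E \<and> u \<noteq> v \<and> Q u v > 0}\<^sup>*)"

definition invariant_prob :: "'a set \<Rightarrow> ('a \<Rightarrow> 'a \<Rightarrow> real) \<Rightarrow> ('a \<Rightarrow> real) \<Rightarrow> bool" where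
  "invariant_prob E Q \<mu> \<longleftrightarrow>
     (\<forall>x\<in>E. \<mu> x \<ge> 0) \<and> (\<Sum>x\<in>E. \<mu> x) = 1 \<and>
     (\<forall>y\<in>E. (\<Sum>x\<in>E - {y}. \<mu> x * Q x y) = \<mu> y * hold_rate E Q y)"

end

theory Submission
  imports Defs
begin

text \<open>The capacity is the Dirichlet form \<open>D(h) = (1/2) \<Sum> \<mu>(x) Q(x,y) (h x - h y)\<^sup>2\<close> of the
  equilibrium potential \<open>h\<close>, and a chain and its symmetrisation have the same Dirichlet form.
  The Dirichlet principle for the reversible chain therefore gives
  \<open>Cap\<^sup>s = D\<^sup>s(h\<^sup>s) \<le> D\<^sup>s(h) = D(h) = Cap\<close>.
  Conversely, \<open>h\<^sup>s\<close> takes at most \<open>|E|\<close> values in \<open>[0,1]\<close>, so some value \<open>t\<close> has no other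
  value in \<open>(t - \<delta>, t)\<close> with \<open>\<delta> |E| \<ge> 1\<close>. Testing the harmonic equations against the
  indicator of \<open>S = {h\<^sup>s \<ge> t}\<close> bounds \<open>Cap\<close> by the stationary flow into \<open>S\<close>, which is at
  most twice the symmetric flow across the boundary of \<open>S\<close>, and \<open>Cap\<^sup>s\<close> is at least \<open>\<delta>\<close>
  times that symmetric flow.\<close>

section \<open>Flows on a finite set\<close>

definition dirichlet_form :: "'a set \<Rightarrow> ('a \<Rightarrow> 'a \<Rightarrow> real) \<Rightarrow> ('a \<Rightarrow> real) \<Rightarrow> real" where
  "dirichlet_form E w f = (\<Sum>x\<in>E. \<Sum>y\<in>E. w x y * (f x - f y)\<^sup>2) / 2"

lemma balanced_flux_eq_dirichlet_form:
  fixes w :: "'a \<Rightarrow> 'a \<Rightarrow> real"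
  assumes "finite E" and balanced: "\<And>y. y \<in> E \<Longrightarrow> (\<Sum>x\<in>E. w x y) = (\<Sum>x\<in>E. w y x)"
  shows "(\<Sum>x\<in>E. f x * (\<Sum>y\<in>E. w x y * (f x - f y))) = dirichlet_form E w f"
proof -
  define a where "a = (\<Sum>x\<in>E. \<Sum>y\<in>E. w x y * (f x)\<^sup>2)"
  define b where "b = (\<Sum>x\<in>E. \<Sum>y\<in>E. w x y * (f y)\<^sup>2)"
  define c where "c = (\<Sum>x\<in>E. \<Sum>y\<in>E. w x y * f x * f y)"
  have "b = (\<Sum>y\<in>E. (f y)\<^sup>2 * (\<Sum>x\<in>E. w x y))"
    unfolding b_def by (subst sum.swap) (simp add: sum_distrib_right mult.commute)
  also have "\<dots> = (\<Sum>y\<in>E. (f y)\<^sup>2 * (\<Sum>x\<in>E. w y x))"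
    using balanced by simp
  also have "\<dots> = a"
    unfolding a_def by (simp add: sum_distrib_right mult.commute)
  finally have "b = a" .
  moreover have "(\<Sum>x\<in>E. f x * (\<Sum>y\<in>E. w x y * (f x - f y))) = a - c"
    unfolding a_def c_def
    by (simp add: sum_distrib_left sum_subtractf[symmetric] power2_eq_square algebra_simps)
  moreover have "(\<Sum>x\<in>E. \<Sum>y\<in>E. w x y * (f x - f y)\<^sup>2) = a + b - 2 * c"
    unfolding a_def b_def c_def
    by (simp add: sum_distrib_left sum_subtractf[symmetric] sum.distrib[symmetric]
        power2_eq_square algebra_simps)
  ultimately show ?thesis by (simp add: dirichlet_form_def)
qed

lemma balanced_flux_out_of:
  fixes w :: "'a \<Rightarrow> 'a \<Rightarrow> real"
  assumes fin: "finite E" and S: "S \<subseteq> E"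
    and balanced: "\<And>y. y \<in> E \<Longrightarrow> (\<Sum>x\<in>E. w x y) = (\<Sum>x\<in>E. w y x)"
  shows "(\<Sum>x\<in>S. \<Sum>y\<in>E. w x y * (f x - f y)) =
         (\<Sum>x\<in>S. \<Sum>y\<in>E-S. w y x * f x - w x y * f y)"
proof -
  have "(\<Sum>x\<in>S. \<Sum>y\<in>E. w x y * (f x - f y)) = (\<Sum>x\<in>S. \<Sum>y\<in>E. w y x * f x - w x y * f y)"
  proof (rule sum.cong[OF refl])
    fix x assume "x \<in> S"
    then have "f x * (\<Sum>y\<in>E. w x y) = f x * (\<Sum>y\<in>E. w y x)"
      using balanced S by auto
    then show "(\<Sum>y\<in>E. w x y * (f x - f y)) = (\<Sum>y\<in>E. w y x * f x - w x y * f y)"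
      by (simp add: sum_distrib_left sum_subtractf algebra_simps)
  qed
  also have "\<dots> = (\<Sum>x\<in>S. \<Sum>y\<in>S. w y x * f x - w x y * f y) +
                  (\<Sum>x\<in>S. \<Sum>y\<in>E-S. w y x * f x - w x y * f y)"
    by (simp add: sum.distrib[symmetric] sum.subset_diff[OF S fin] add.commute)
  moreover have "(\<Sum>x\<in>S. \<Sum>y\<in>S. w x y * f y) = (\<Sum>x\<in>S. \<Sum>y\<in>S. w y x * f x)"
    by (rule sum.swap)
  then have "(\<Sum>x\<in>S. \<Sum>y\<in>S. w y x * f x - w x y * f y) = 0"
    by (simp add: sum_subtractf)
  ultimately show ?thesis by simp
qed

lemma balanced_flux_out_of_le_inflow:
  fixes w :: "'a \<Rightarrow> 'a \<Rightarrow> real"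
  assumes "finite E" and S: "S \<subseteq> E"
    and "\<And>y. y \<in> E \<Longrightarrow> (\<Sum>x\<in>E. w x y) = (\<Sum>x\<in>E. w y x)"
    and w: "\<And>x y. x \<in> E \<Longrightarrow> y \<in> E \<Longrightarrow> 0 \<le> w x y"
    and f: "\<And>x. x \<in> E \<Longrightarrow> 0 \<le> f x \<and> f x \<le> 1"
  shows "(\<Sum>x\<in>S. \<Sum>y\<in>E. w x y * (f x - f y)) \<le> (\<Sum>x\<in>S. \<Sum>y\<in>E-S. w y x)"
proof -
  have "w y x * f x - w x y * f y \<le> w y x" if "x \<in> S" "y \<in> E - S" for x y
  proof -
    have xy: "x \<in> E" "y \<in> E" using that S by auto
    have "w y x * f x \<le> w y x * 1"
      using f[OF xy(1)] w[OF xy(2,1)] by (intro mult_left_mono) auto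
    moreover have "0 \<le> w x y * f y" using f[OF xy(2)] w[OF xy] by simp
    ultimately show ?thesis by simp
  qed
  then have "(\<Sum>x\<in>S. \<Sum>y\<in>E-S. w y x * f x - w x y * f y) \<le> (\<Sum>x\<in>S. \<Sum>y\<in>E-S. w y x)"
    by (intro sum_mono) auto
  with balanced_flux_out_of[OF assms(1-3)] show ?thesis by simp
qed

lemma symmetric_flux_out_of:
  fixes w :: "'a \<Rightarrow> 'a \<Rightarrow> real"
  assumes "finite E" and S: "S \<subseteq> E" and sym: "\<And>x y. x \<in> E \<Longrightarrow> y \<in> E \<Longrightarrow> w x y = w y x"
  shows "(\<Sum>x\<in>S. \<Sum>y\<in>E. w x y * (f x - f y)) = (\<Sum>x\<in>S. \<Sum>y\<in>E-S. w x y * (f x - f y))"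
proof -
  have "(\<Sum>x\<in>E. w x y) = (\<Sum>x\<in>E. w y x)" if "y \<in> E" for y
    using sym that by (intro sum.cong) auto
  moreover have "w y x * f x - w x y * f y = w x y * (f x - f y)" if "x \<in> S" "y \<in> E - S" for x y
    using that S sym by (auto simp: algebra_simps)
  ultimately show ?thesis
    by (subst balanced_flux_out_of[OF assms(1,2)]) (auto intro!: sum.cong)
qed

lemma dirichlet_form_symmetrization:
  fixes v w :: "'a \<Rightarrow> 'a \<Rightarrow> real"
  assumes v: "\<And>x y. x \<in> E \<Longrightarrow> y \<in> E \<Longrightarrow> v x y = (w x y + w y x) / 2"
  shows "dirichlet_form E v f = dirichlet_form E w f"
proof -
  have "(\<Sum>x\<in>E. \<Sum>y\<in>E. w y x * (f x - f y)\<^sup>2) = (\<Sum>x\<in>E. \<Sum>y\<in>E. w x y * (f x - f y)\<^sup>2)"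
    by (subst sum.swap) (simp add: power2_commute)
  moreover have "(\<Sum>x\<in>E. \<Sum>y\<in>E. v x y * (f x - f y)\<^sup>2) =
      ((\<Sum>x\<in>E. \<Sum>y\<in>E. w x y * (f x - f y)\<^sup>2) + (\<Sum>x\<in>E. \<Sum>y\<in>E. w y x * (f x - f y)\<^sup>2)) / 2"
    by (simp add: v add_divide_distrib sum.distrib sum_divide_distrib[symmetric] algebra_simps)
  ultimately show ?thesis by (simp add: dirichlet_form_def)
qed

lemma dirichlet_principle:
  fixes w :: "'a \<Rightarrow> 'a \<Rightarrow> real"
  assumes sym: "\<And>x y. x \<in> E \<Longrightarrow> y \<in> E \<Longrightarrow> w x y = w y x"
    and w: "\<And>x y. x \<in> E \<Longrightarrow> y \<in> E \<Longrightarrow> 0 \<le> w x y"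
    and harmonic: "\<And>x. x \<in> E \<Longrightarrow> x \<notin> C \<Longrightarrow> (\<Sum>y\<in>E. w x y * (H x - H y)) = 0"
    and boundary: "\<And>x. x \<in> E \<Longrightarrow> x \<in> C \<Longrightarrow> f x = H x"
  shows "dirichlet_form E w H \<le> dirichlet_form E w f"
proof -
  define d where "d x = f x - H x" for x
  define cross where "cross = (\<Sum>x\<in>E. \<Sum>y\<in>E. w x y * (H x - H y) * (d x - d y))"
  have "(\<Sum>x\<in>E. \<Sum>y\<in>E. w x y * (H x - H y) * d y) =
        (\<Sum>x\<in>E. \<Sum>y\<in>E. - (w x y * (H x - H y) * d x))"
    by (subst sum.swap) (intro sum.cong refl, simp add: sym algebra_simps)
  moreover have "(\<Sum>x\<in>E. \<Sum>y\<in>E. w x y * (H x - H y) * d x) =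
                 (\<Sum>x\<in>E. d x * (\<Sum>y\<in>E. w x y * (H x - H y)))"
    by (simp add: sum_distrib_left mult.commute)
  moreover have "\<dots> = 0"
    using harmonic boundary by (intro sum.neutral) (auto simp: d_def)
  ultimately have "cross = 0"
    by (simp add: cross_def right_diff_distrib sum_subtractf sum_negf)
  moreover have "w x y * (f x - f y)\<^sup>2 = w x y * (H x - H y)\<^sup>2 +
      2 * (w x y * (H x - H y) * (d x - d y)) + w x y * (d x - d y)\<^sup>2" for x y
    by (simp add: d_def power2_eq_square algebra_simps)
  then have "(\<Sum>x\<in>E. \<Sum>y\<in>E. w x y * (f x - f y)\<^sup>2) =
      (\<Sum>x\<in>E. \<Sum>y\<in>E. w x y * (H x - H y)\<^sup>2) + 2 * cross + (\<Sum>x\<in>E. \<Sum>y\<in>E. w x y * (d x - d y)\<^sup>2)"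
    by (simp add: cross_def sum.distrib sum_distrib_left)
  moreover have "0 \<le> (\<Sum>x\<in>E. \<Sum>y\<in>E. w x y * (d x - d y)\<^sup>2)"
    by (intro sum_nonneg mult_nonneg_nonneg w) auto
  ultimately show ?thesis by (simp add: dirichlet_form_def)
qed

section \<open>Stationary chains\<close>

lemma sum_lists_length_Suc:
  assumes "finite E"
  shows "(\<Sum>xs\<in>{xs. length xs = Suc n \<and> set xs \<subseteq> E \<and> P xs}. f xs) =
         (\<Sum>y\<in>E. \<Sum>ys\<in>{ys. length ys = n \<and> set ys \<subseteq> E \<and> P (y # ys)}. f (y # ys))"
proof -
  let ?S = "SIGMA y:E. {ys. length ys = n \<and> set ys \<subseteq> E \<and> P (y # ys)}"
  have "{xs. length xs = Suc n \<and> set xs \<subseteq> E \<and> P xs} = (\<lambda>(y, ys). y # ys) ` ?S"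
    by (auto simp: length_Suc_conv image_iff)
  moreover have "inj_on (\<lambda>(y, ys). y # ys) ?S" by (auto simp: inj_on_def)
  ultimately have "(\<Sum>xs\<in>{xs. length xs = Suc n \<and> set xs \<subseteq> E \<and> P xs}. f xs) =
                   (\<Sum>(y, ys)\<in>?S. f (y # ys))"
    by (simp add: sum.reindex case_prod_unfold)
  also have "\<dots> = (\<Sum>y\<in>E. \<Sum>ys\<in>{ys. length ys = n \<and> set ys \<subseteq> E \<and> P (y # ys)}. f (y # ys))"
  proof (rule sum.Sigma[symmetric])
    show "\<forall>y\<in>E. finite {ys. length ys = n \<and> set ys \<subseteq> E \<and> P (y # ys)}"
      by (auto intro: finite_subset[OF _ finite_lists_length_eq[OF assms, of n]])
  qed (rule assms)
  finally show ?thesis .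
qed

definition flow :: "('a \<Rightarrow> real) \<Rightarrow> ('a \<Rightarrow> 'a \<Rightarrow> real) \<Rightarrow> 'a \<Rightarrow> 'a \<Rightarrow> real" where
  "flow \<mu> Q x y = (if x = y then 0 else \<mu> x * Q x y)"

lemma sum_flow_out:
  assumes "finite E"
  shows "(\<Sum>y\<in>E. flow \<mu> Q x y) = \<mu> x * hold_rate E Q x"
proof -
  have "(\<Sum>y\<in>E. flow \<mu> Q x y) = (\<Sum>y\<in>E - {x}. flow \<mu> Q x y)"
    using assms by (intro sum.mono_neutral_right) (auto simp: flow_def)
  also have "\<dots> = (\<Sum>y\<in>E - {x}. \<mu> x * Q x y)"
    by (rule sum.cong) (auto simp: flow_def)
  finally show ?thesis by (simp add: hold_rate_def sum_distrib_left)
qed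

lemma sum_flow_in:
  assumes "finite E"
  shows "(\<Sum>x\<in>E. flow \<mu> Q x y) = (\<Sum>x\<in>E - {y}. \<mu> x * Q x y)"
proof -
  have "(\<Sum>x\<in>E. flow \<mu> Q x y) = (\<Sum>x\<in>E - {y}. flow \<mu> Q x y)"
    using assms by (intro sum.mono_neutral_right) (auto simp: flow_def)
  also have "\<dots> = (\<Sum>x\<in>E - {y}. \<mu> x * Q x y)"
    by (rule sum.cong) (auto simp: flow_def)
  finally show ?thesis .
qed

lemma flow_reversible_rates:
  assumes "0 < \<mu> x"
  shows "flow \<mu> (reversible_rates R \<mu>) x y = (flow \<mu> R x y + flow \<mu> R y x) / 2"
  using assms by (simp add: flow_def reversible_rates_def field_simps)

locale stationary_chain =
  fixes E :: "'a set" and Q :: "'a \<Rightarrow> 'a \<Rightarrow> real" and \<mu> :: "'a \<Rightarrow> real"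
  assumes finite_E: "finite E"
    and mu_nonneg: "\<And>x. x \<in> E \<Longrightarrow> 0 \<le> \<mu> x"
    and rate_nonneg: "\<And>x y. x \<in> E \<Longrightarrow> y \<in> E \<Longrightarrow> x \<noteq> y \<Longrightarrow> 0 \<le> Q x y"
    and hold_rate_pos: "\<And>x. x \<in> E \<Longrightarrow> 0 < hold_rate E Q x"
    and stationary: "\<And>y. y \<in> E \<Longrightarrow> (\<Sum>x\<in>E - {y}. \<mu> x * Q x y) = \<mu> y * hold_rate E Q y"
begin

lemma jump_prob_nonneg: "x \<in> E \<Longrightarrow> y \<in> E \<Longrightarrow> 0 \<le> jump_prob E Q x y"
  unfolding jump_prob_def using rate_nonneg[of x y] hold_rate_pos[of x] by auto

lemma sum_jump_prob:
  assumes "x \<in> E"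
  shows "(\<Sum>y\<in>E. jump_prob E Q x y) = 1"
proof -
  have "(\<Sum>y\<in>E. jump_prob E Q x y) = (\<Sum>y\<in>E - {x}. Q x y / hold_rate E Q x)"
    using sum.remove[OF finite_E assms, of "jump_prob E Q x"] by (simp add: jump_prob_def)
  then show ?thesis
    using hold_rate_pos[OF assms] by (simp add: sum_divide_distrib[symmetric] hold_rate_def)
qed

lemma path_weight_nonneg: "set xs \<subseteq> E \<Longrightarrow> 0 \<le> path_weight E Q xs"
  by (induction xs rule: induct_list012) (auto intro!: mult_nonneg_nonneg jump_prob_nonneg)

lemma flow_nonneg: "x \<in> E \<Longrightarrow> y \<in> E \<Longrightarrow> 0 \<le> flow \<mu> Q x y"
  using mu_nonneg rate_nonneg by (simp add: flow_def)

lemma flow_balanced: "y \<in> E \<Longrightarrow> (\<Sum>x\<in>E. flow \<mu> Q x y) = (\<Sum>x\<in>E. flow \<mu> Q y x)"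
  by (simp add: sum_flow_in sum_flow_out finite_E stationary)

lemma flow_eq_jump_prob: "x \<in> E \<Longrightarrow> flow \<mu> Q x y = \<mu> x * hold_rate E Q x * jump_prob E Q x y"
  using hold_rate_pos[of x] by (simp add: flow_def jump_prob_def)

end

lemma finite_set_has_gap:
  fixes V :: "real set"
  assumes "finite V" "a \<in> V" "b \<in> V" "a < b"
  shows "\<exists>t\<in>V. \<exists>\<delta>>0. a < t \<and> t \<le> b \<and> b - a \<le> \<delta> * (real (card V) - 1) \<and>
           (\<forall>v\<in>V. v < t \<longrightarrow> v \<le> t - \<delta>)"
  using assms
proof (induction "card V" arbitrary: V b rule: less_induct)
  case less
  \<comment> \<open>\<open>s\<close> is the predecessor of \<open>b\<close> in \<open>V\<close>: either the gap below \<open>b\<close> is wide enough, or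
      the induction hypothesis for \<open>V - {b}\<close> on \<open>[a, s]\<close> provides one.\<close>
  define s where "s = Max {v\<in>V. v < b}"
  have fin_below: "finite {v\<in>V. v < b}" "a \<in> {v\<in>V. v < b}"
    using less.prems by auto
  have "s \<in> {v\<in>V. v < b}"
    unfolding s_def using fin_below by (intro Max_in) auto
  then have "s \<in> V" "s < b" by auto
  have a_le_s: "a \<le> s"
    unfolding s_def using fin_below by (intro Max_ge)
  have below: "v \<le> s" if "v \<in> V" "v < b" for v
    using fin_below that by (auto simp: s_def)
  define m where "m = real (card V) - 1"
  have "card {a, b} \<le> card V"
    using less.prems by (intro card_mono) auto
  then have m1: "1 \<le> m" using less.prems(4) by (simp add: m_def)
  show ?case
  proof (cases "b - a \<le> (b - s) * m")
    case True
    then show ?thesis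
      using \<open>s < b\<close> below less.prems by (intro bexI[of _ b] exI[of _ "b - s"]) (force simp: m_def)+
  next
    case False
    have "a < s"
    proof (rule ccontr)
      assume "\<not> a < s"
      then have "s = a" using a_le_s by simp
      then show False using False m1 less.prems(4) mult_left_mono[of 1 m "b - a"] by simp
    qed
    have "card (V - {b}) < card V"
      using less.prems by (intro card_Diff1_less) auto
    then obtain t \<delta> where t: "t \<in> V - {b}" "\<delta> > 0" "a < t" "t \<le> s"
        "s - a \<le> \<delta> * (real (card (V - {b})) - 1)" "\<forall>v\<in>V - {b}. v < t \<longrightarrow> v \<le> t - \<delta>"
      using less.hyps[of "V - {b}" s] less.prems \<open>a < s\<close> \<open>s \<in> V\<close> \<open>s < b\<close> by auto
    have "real (card (V - {b})) = m"
      using less.prems \<open>card {a, b} \<le> card V\<close> by (simp add: m_def of_nat_diff)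
    then have "s - a \<le> \<delta> * (m - 1)" using t(5) by simp
    have "b - a \<le> \<delta> * m"
    proof (rule ccontr)
      assume "\<not> b - a \<le> \<delta> * m"
      then have "\<delta> * m * (m - 1) \<le> (b - a) * (m - 1)"
        using m1 by (intro mult_right_mono) auto
      moreover have "(s - a) * m \<le> \<delta> * (m - 1) * m"
        using \<open>s - a \<le> \<delta> * (m - 1)\<close> m1 by (intro mult_right_mono) auto
      ultimately have "(s - a) * m \<le> (b - a) * (m - 1)" by (simp add: algebra_simps)
      with False show False by (simp add: algebra_simps)
    qed
    then show ?thesis
      using t \<open>s < b\<close> by (intro bexI[of _ t] exI[of _ \<delta>]) (auto simp: m_def)
  qed
qed

locale capacity_problem = stationary_chain +
  fixes A B :: "'a set"
  assumes A_subset: "A \<subseteq> E" and B_subset: "B \<subseteq> E" and disjoint: "A \<inter> B = {}"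
begin

text \<open>\<open>hit_B_at n y\<close> is the probability that the jump chain started at \<open>y\<close> enters \<open>A \<union> B\<close>
  for the first time at step \<open>n\<close>, and does so in \<open>B\<close>. Step \<open>0\<close> counts, unlike in
  \<open>escape_prob\<close>, so that the equilibrium potential is \<open>1\<close> on \<open>A\<close> and \<open>0\<close> on \<open>B\<close>.\<close>

definition hit_B_paths :: "nat \<Rightarrow> 'a \<Rightarrow> 'a list set" where
  "hit_B_paths n y = {ys. length ys = n \<and> set ys \<subseteq> E \<and> last (y # ys) \<in> B \<and>
                          (\<forall>i<n. (y # ys) ! i \<notin> A \<union> B)}"

definition hit_B_at :: "nat \<Rightarrow> 'a \<Rightarrow> real" where
  "hit_B_at n y = (\<Sum>ys\<in>hit_B_paths n y. path_weight E Q (y # ys))"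

definition hit_B :: "'a \<Rightarrow> real" where
  "hit_B y = (\<Sum>n. hit_B_at n y)"

definition potential :: "'a \<Rightarrow> real" where
  "potential y = 1 - hit_B y"

lemma hit_B_at_0: "hit_B_at 0 y = (if y \<in> B then 1 else 0)"
proof -
  have "hit_B_paths 0 y = (if y \<in> B then {[]} else {})"
    by (auto simp: hit_B_paths_def)
  then show ?thesis by (simp add: hit_B_at_def)
qed

lemma hit_B_at_Suc:
  "hit_B_at (Suc n) y = (if y \<in> A \<union> B then 0 else \<Sum>z\<in>E. jump_prob E Q y z * hit_B_at n z)"
proof -
  let ?P = "\<lambda>xs. last (y # xs) \<in> B \<and> (\<forall>i<Suc n. (y # xs) ! i \<notin> A \<union> B)"
  have paths: "{zs. length zs = n \<and> set zs \<subseteq> E \<and> ?P (z # zs)} =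
      (if y \<in> A \<union> B then {} else hit_B_paths n z)" for z
    by (auto simp: hit_B_paths_def All_less_Suc2)
  have "hit_B_at (Suc n) y =
      (\<Sum>xs\<in>{xs. length xs = Suc n \<and> set xs \<subseteq> E \<and> ?P xs}. path_weight E Q (y # xs))"
    by (simp add: hit_B_at_def hit_B_paths_def)
  also have "\<dots> = (\<Sum>z\<in>E. \<Sum>zs\<in>{zs. length zs = n \<and> set zs \<subseteq> E \<and> ?P (z # zs)}.
                     path_weight E Q (y # z # zs))"
    by (rule sum_lists_length_Suc[OF finite_E])
  also have "\<dots> = (if y \<in> A \<union> B then 0 else \<Sum>z\<in>E. jump_prob E Q y z * hit_B_at n z)"
    using paths by (simp add: hit_B_at_def sum_distrib_left)
  finally show ?thesis .
qed

lemma hit_B_at_nonneg: "y \<in> E \<Longrightarrow> 0 \<le> hit_B_at n y"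
  unfolding hit_B_at_def hit_B_paths_def by (intro sum_nonneg path_weight_nonneg) auto

lemma sum_hit_B_at_le_1: "y \<in> E \<Longrightarrow> (\<Sum>n<N. hit_B_at n y) \<le> 1"
proof (induction N arbitrary: y)
  case 0
  then show ?case by simp
next
  case (Suc N)
  have "(\<Sum>n<Suc N. hit_B_at n y) = hit_B_at 0 y + (\<Sum>n<N. hit_B_at (Suc n) y)"
    by (rule sum.lessThan_Suc_shift)
  also have "\<dots> \<le> 1"
  proof (cases "y \<in> A \<union> B")
    case True
    then show ?thesis
      using disjoint by (auto simp: hit_B_at_0 hit_B_at_Suc)
  next
    case False
    have "(\<Sum>n<N. hit_B_at (Suc n) y) = (\<Sum>z\<in>E. jump_prob E Q y z * (\<Sum>n<N. hit_B_at n z))"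
      using False by (simp add: hit_B_at_Suc sum_distrib_left sum.swap[of _ "{..<N}"])
    also have "\<dots> \<le> (\<Sum>z\<in>E. jump_prob E Q y z * 1)"
      by (intro sum_mono mult_left_mono Suc.IH jump_prob_nonneg Suc.prems)
    also have "\<dots> = 1" using sum_jump_prob[OF Suc.prems] by simp
    finally show ?thesis
      using False by (simp add: hit_B_at_0)
  qed
  finally show ?case .
qed

lemma summable_hit_B_at: "y \<in> E \<Longrightarrow> summable (\<lambda>n. hit_B_at n y)"
  by (rule summableI_nonneg_bounded[where x = 1]) (auto intro: hit_B_at_nonneg sum_hit_B_at_le_1)

lemma sum_jump_prob_hit_B:
  "(\<Sum>z\<in>E. jump_prob E Q y z * hit_B z) = (\<Sum>n. \<Sum>z\<in>E. jump_prob E Q y z * hit_B_at n z)"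
  unfolding hit_B_def
  by (subst suminf_sum) (auto intro!: sum.cong suminf_mult[symmetric] summable_mult summable_hit_B_at)

lemma hit_B_harmonic: "y \<in> E \<Longrightarrow> y \<notin> A \<union> B \<Longrightarrow> hit_B y = (\<Sum>z\<in>E. jump_prob E Q y z * hit_B z)"
  using suminf_split_head[OF summable_hit_B_at, of y]
  by (simp add: hit_B_def hit_B_at_0 hit_B_at_Suc sum_jump_prob_hit_B[unfolded hit_B_def])

lemma escape_prob_eq_hit_B: "escape_prob E Q A B x = (\<Sum>y\<in>E. jump_prob E Q x y * hit_B y)"
  unfolding escape_prob_def sum_jump_prob_hit_B
  by (subst sum_lists_length_Suc[OF finite_E]) (simp add: hit_B_at_def hit_B_paths_def sum_distrib_left)

lemma potential_bounds: "y \<in> E \<Longrightarrow> 0 \<le> potential y \<and> potential y \<le> 1"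
  unfolding potential_def hit_B_def
  by (auto intro: suminf_nonneg suminf_le_const summable_hit_B_at hit_B_at_nonneg sum_hit_B_at_le_1)

lemma hit_B_boundary:
  assumes "y \<in> A \<union> B"
  shows "hit_B y = (if y \<in> B then 1 else 0)"
proof -
  have "hit_B_at n y = 0" if "n \<notin> {0}" for n
    using assms that by (cases n) (auto simp: hit_B_at_Suc)
  then have "hit_B y = hit_B_at 0 y"
    unfolding hit_B_def by (subst suminf_finite[of "{0}"]) auto
  then show ?thesis by (simp add: hit_B_at_0)
qed

lemma potential_A: "x \<in> A \<Longrightarrow> potential x = 1"
  using hit_B_boundary[of x] disjoint by (auto simp: potential_def)

lemma potential_B: "x \<in> B \<Longrightarrow> potential x = 0"
  using hit_B_boundary[of x] by (simp add: potential_def)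

lemma potential_harmonic:
  assumes "x \<in> E" "x \<notin> A \<union> B"
  shows "(\<Sum>y\<in>E. flow \<mu> Q x y * (potential x - potential y)) = 0"
proof -
  have "(\<Sum>y\<in>E. flow \<mu> Q x y * (potential x - potential y)) =
      \<mu> x * hold_rate E Q x * ((\<Sum>y\<in>E. jump_prob E Q x y * hit_B y) - (\<Sum>y\<in>E. jump_prob E Q x y) * hit_B x)"
    by (simp add: flow_eq_jump_prob[OF assms(1)] potential_def sum_distrib_left sum_distrib_right
        sum_subtractf algebra_simps)
  then show ?thesis
    using hit_B_harmonic[OF assms] sum_jump_prob[OF assms(1)] by simp
qed

lemma capacity_eq_flux:
  assumes "\<And>x. x \<in> A \<Longrightarrow> f x = 1" "\<And>x. x \<in> B \<Longrightarrow> f x = 0"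
  shows "capacity E Q \<mu> A B = (\<Sum>x\<in>E. f x * (\<Sum>y\<in>E. flow \<mu> Q x y * (potential x - potential y)))"
proof -
  have "capacity E Q \<mu> A B = (\<Sum>x\<in>A. \<Sum>y\<in>E. flow \<mu> Q x y * (potential x - potential y))"
    unfolding capacity_def
  proof (rule sum.cong[OF refl])
    fix x assume "x \<in> A"
    then have "x \<in> E" "hit_B x = 0"
      using A_subset hit_B_boundary[of x] disjoint by auto
    then show "\<mu> x * hold_rate E Q x * escape_prob E Q A B x =
               (\<Sum>y\<in>E. flow \<mu> Q x y * (potential x - potential y))"
      by (simp add: escape_prob_eq_hit_B flow_eq_jump_prob potential_def sum_distrib_left algebra_simps)
  qed
  also have "\<dots> = (\<Sum>x\<in>E. f x * (\<Sum>y\<in>E. flow \<mu> Q x y * (potential x - potential y)))"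
  proof (rule sum.mono_neutral_cong_left[OF finite_E A_subset])
    show "\<forall>x\<in>E - A. f x * (\<Sum>y\<in>E. flow \<mu> Q x y * (potential x - potential y)) = 0"
      using assms(2) potential_harmonic by auto
  qed (simp add: assms(1))
  finally show ?thesis .
qed

lemma capacity_eq_dirichlet_form: "capacity E Q \<mu> A B = dirichlet_form E (flow \<mu> Q) potential"
proof -
  have "capacity E Q \<mu> A B = (\<Sum>x\<in>E. potential x * (\<Sum>y\<in>E. flow \<mu> Q x y * (potential x - potential y)))"
    by (intro capacity_eq_flux) (auto simp: potential_A potential_B)
  also have "\<dots> = dirichlet_form E (flow \<mu> Q) potential"
    by (rule balanced_flux_eq_dirichlet_form[OF finite_E flow_balanced])
  finally show ?thesis .
qed

lemma capacity_eq_flux_out_of: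
  assumes "A \<subseteq> S" "S \<subseteq> E - B"
  shows "capacity E Q \<mu> A B = (\<Sum>x\<in>S. \<Sum>y\<in>E. flow \<mu> Q x y * (potential x - potential y))"
proof -
  have "(\<Sum>x\<in>E. (if x \<in> S then 1 else 0) * F x) = (\<Sum>x\<in>S. F x)" for F :: "'a \<Rightarrow> real"
  proof -
    have "(\<Sum>x\<in>E. (if x \<in> S then 1 else 0) * F x) = (\<Sum>x\<in>E. if x \<in> S then F x else 0)"
      by (rule sum.cong) auto
    also have "\<dots> = (\<Sum>x\<in>{x\<in>E. x \<in> S}. F x)"
      by (rule sum.inter_filter[OF finite_E, symmetric])
    also have "{x\<in>E. x \<in> S} = S" using assms by auto
    finally show ?thesis .
  qed
  moreover have "capacity E Q \<mu> A B = (\<Sum>x\<in>E. (if x \<in> S then 1 else 0) *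
      (\<Sum>y\<in>E. flow \<mu> Q x y * (potential x - potential y)))"
    using assms by (intro capacity_eq_flux) auto
  ultimately show ?thesis by simp
qed

lemma capacity_le_inflow:
  assumes "A \<subseteq> S" "S \<subseteq> E - B"
  shows "capacity E Q \<mu> A B \<le> (\<Sum>x\<in>S. \<Sum>y\<in>E - S. flow \<mu> Q y x)"
  unfolding capacity_eq_flux_out_of[OF assms] using assms
  by (intro balanced_flux_out_of_le_inflow[OF finite_E _ flow_balanced flow_nonneg potential_bounds]) auto

lemma level_cut_le_capacity:
  assumes sym: "\<And>x y. x \<in> E \<Longrightarrow> y \<in> E \<Longrightarrow> flow \<mu> Q x y = flow \<mu> Q y x"
    and t: "0 < t" "t \<le> 1" and gap: "\<And>x. x \<in> E \<Longrightarrow> potential x < t \<Longrightarrow> potential x \<le> t - \<delta>"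
    and S_def: "S = {x\<in>E. t \<le> potential x}"
  shows "\<delta> * (\<Sum>x\<in>S. \<Sum>y\<in>E - S. flow \<mu> Q x y) \<le> capacity E Q \<mu> A B"
proof -
  have "A \<subseteq> S" "S \<subseteq> E - B"
    using A_subset B_subset t by (auto simp: S_def potential_A potential_B)
  have "\<delta> * (\<Sum>x\<in>S. \<Sum>y\<in>E - S. flow \<mu> Q x y) = (\<Sum>x\<in>S. \<Sum>y\<in>E - S. flow \<mu> Q x y * \<delta>)"
    by (simp add: sum_distrib_left mult.commute)
  also have "\<dots> \<le> (\<Sum>x\<in>S. \<Sum>y\<in>E - S. flow \<mu> Q x y * (potential x - potential y))"
  proof (intro sum_mono mult_left_mono)
    fix x y assume "x \<in> S" "y \<in> E - S"
    then show "\<delta> \<le> potential x - potential y" "0 \<le> flow \<mu> Q x y"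
      using gap[of y] flow_nonneg[of x y] by (auto simp: S_def)
  qed
  also have "\<dots> = capacity E Q \<mu> A B"
    using capacity_eq_flux_out_of[OF \<open>A \<subseteq> S\<close> \<open>S \<subseteq> E - B\<close>]
      symmetric_flux_out_of[OF finite_E _ sym] by (simp add: S_def)
  finally show ?thesis .
qed

lemma potential_level_gap:
  assumes "A \<noteq> {}" "B \<noteq> {}"
  obtains t \<delta> where "0 < t" "t \<le> 1" "1 \<le> \<delta> * real (card E)"
    "\<And>x. x \<in> E \<Longrightarrow> potential x < t \<Longrightarrow> potential x \<le> t - \<delta>"
proof -
  define V where "V = potential ` E"
  obtain a b where "a \<in> A" "b \<in> B" using assms by blast
  then have "potential a \<in> V" "potential b \<in> V"
    using A_subset B_subset by (auto simp: V_def)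
  then have "0 \<in> V" "1 \<in> V"
    using \<open>a \<in> A\<close> \<open>b \<in> B\<close> by (simp_all add: potential_A potential_B)
  then obtain t \<delta> where t: "t \<in> V" "\<delta> > 0" "0 < t" "t \<le> 1" "1 \<le> \<delta> * (real (card V) - 1)"
    "\<forall>v\<in>V. v < t \<longrightarrow> v \<le> t - \<delta>"
    using finite_set_has_gap[of V 0 1] finite_E by (auto simp: V_def)
  have "card V \<le> card E" unfolding V_def by (rule card_image_le[OF finite_E])
  then have "\<delta> * (real (card V) - 1) \<le> \<delta> * real (card E)"
    using t(2) by (intro mult_left_mono) auto
  then have "1 \<le> \<delta> * real (card E)" using t(5) by linarith
  then show thesis
    using that[of t \<delta>] t by (auto simp: V_def)
qed

end

section \<open>Comparison with the symmetrised chain\<close>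

lemma capacity_symmetrization_le:
  assumes "capacity_problem E Q \<mu> A B" "capacity_problem E Qs \<mu> A B"
    and sym: "\<And>x y. x \<in> E \<Longrightarrow> y \<in> E \<Longrightarrow> flow \<mu> Qs x y = (flow \<mu> Q x y + flow \<mu> Q y x) / 2"
  shows "capacity E Qs \<mu> A B \<le> capacity E Q \<mu> A B"
proof -
  interpret Q: capacity_problem E Q \<mu> A B by fact
  interpret Qs: capacity_problem E Qs \<mu> A B by fact
  have "capacity E Qs \<mu> A B = dirichlet_form E (flow \<mu> Qs) Qs.potential"
    by (rule Qs.capacity_eq_dirichlet_form)
  also have "\<dots> \<le> dirichlet_form E (flow \<mu> Qs) Q.potential"
  proof (rule dirichlet_principle[where C = "A \<union> B", OF _ Qs.flow_nonneg Qs.potential_harmonic])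
    show "flow \<mu> Qs x y = flow \<mu> Qs y x" if "x \<in> E" "y \<in> E" for x y
      using that by (simp add: sym add.commute)
  qed (auto simp: Q.potential_A Q.potential_B Qs.potential_A Qs.potential_B)
  also have "\<dots> = dirichlet_form E (flow \<mu> Q) Q.potential"
    by (rule dirichlet_form_symmetrization) (rule sym)
  also have "\<dots> = capacity E Q \<mu> A B"
    by (rule Q.capacity_eq_dirichlet_form[symmetric])
  finally show ?thesis .
qed

lemma capacity_le_card_symmetrization:
  assumes "capacity_problem E Q \<mu> A B" "capacity_problem E Qs \<mu> A B"
    and sym: "\<And>x y. x \<in> E \<Longrightarrow> y \<in> E \<Longrightarrow> flow \<mu> Qs x y = (flow \<mu> Q x y + flow \<mu> Q y x) / 2"
    and "A \<noteq> {}" "B \<noteq> {}"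
  shows "capacity E Q \<mu> A B \<le> 2 * real (card E) * capacity E Qs \<mu> A B"
proof -
  interpret Q: capacity_problem E Q \<mu> A B by fact
  interpret Qs: capacity_problem E Qs \<mu> A B by fact
  obtain t \<delta> where t: "0 < t" "t \<le> 1" and \<delta>: "1 \<le> \<delta> * real (card E)"
    and gap: "\<And>x. x \<in> E \<Longrightarrow> Qs.potential x < t \<Longrightarrow> Qs.potential x \<le> t - \<delta>"
    using Qs.potential_level_gap[OF assms(4,5)] by blast
  define S where "S = {x\<in>E. t \<le> Qs.potential x}"
  define C where "C = (\<Sum>x\<in>S. \<Sum>y\<in>E - S. flow \<mu> Qs x y)"
  have "A \<subseteq> S" "S \<subseteq> E - B"
    using Qs.A_subset Qs.B_subset t by (auto simp: S_def Qs.potential_A Qs.potential_B)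
  have "0 \<le> C"
    unfolding C_def S_def by (intro sum_nonneg Qs.flow_nonneg) auto
  have "capacity E Q \<mu> A B \<le> (\<Sum>x\<in>S. \<Sum>y\<in>E - S. flow \<mu> Q y x)"
    by (rule Q.capacity_le_inflow[OF \<open>A \<subseteq> S\<close> \<open>S \<subseteq> E - B\<close>])
  also have "\<dots> \<le> (\<Sum>x\<in>S. \<Sum>y\<in>E - S. 2 * flow \<mu> Qs x y)"
    using \<open>S \<subseteq> E - B\<close> by (intro sum_mono) (auto simp: sym Q.flow_nonneg)
  also have "\<dots> = 2 * C"
    by (simp add: C_def sum_distrib_left)
  also have "\<dots> \<le> 2 * real (card E) * (\<delta> * C)"
    using mult_right_mono[OF \<delta> \<open>0 \<le> C\<close>] by (simp add: mult_ac)
  also have "\<dots> \<le> 2 * real (card E) * capacity E Qs \<mu> A B"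
    using Qs.level_cut_le_capacity[OF _ t gap S_def] sym
    by (intro mult_left_mono) (auto simp: C_def add.commute)
  finally show ?thesis .
qed

section \<open>Irreducible chains and their reversible versions\<close>

lemma invariant_prob_pos:
  assumes fin: "finite E" and nonneg: "\<forall>x\<in>E. \<forall>y\<in>E. x \<noteq> y \<longrightarrow> R x y \<ge> 0"
    and irr: "irreducible E R" and inv: "invariant_prob E R \<mu>" and "x \<in> E"
  shows "0 < \<mu> x"
proof (rule ccontr)
  assume "\<not> 0 < \<mu> x"
  with inv \<open>x \<in> E\<close> have "\<mu> x = 0" by (auto simp: invariant_prob_def intro: antisym)
  \<comment> \<open>Stationarity at a null state forces every state that jumps to it to be null.\<close>
  have "\<mu> y = 0" if "y \<in> E" for y
  proof -
    have "(y, x) \<in> {(u, v). u \<in> E \<and> v \<in> E \<and> u \<noteq> v \<and> R u v > 0}\<^sup>*"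
      using irr that \<open>x \<in> E\<close> by (auto simp: irreducible_def)
    then show ?thesis
    proof (induction rule: converse_rtrancl_induct)
      case base
      show ?case by fact
    next
      case (step u z)
      then have u: "u \<in> E" "z \<in> E" "u \<noteq> z" "0 < R u z" by auto
      have "(\<Sum>v\<in>E - {z}. \<mu> v * R v z) = 0"
        using inv u(2) step.IH by (simp add: invariant_prob_def)
      moreover have "\<forall>v\<in>E - {z}. 0 \<le> \<mu> v * R v z"
        using inv nonneg u(2) by (auto simp: invariant_prob_def)
      ultimately have "\<mu> u * R u z = 0"
        using sum_nonneg_eq_0_iff[of "E - {z}" "\<lambda>v. \<mu> v * R v z"] fin u by blast
      then show ?case using u(4) by simp
    qed
  qed
  then show False using inv by (simp add: invariant_prob_def)
qed

lemma hold_rate_pos_irreducible: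
  assumes fin: "finite E" and nonneg: "\<forall>x\<in>E. \<forall>y\<in>E. x \<noteq> y \<longrightarrow> R x y \<ge> 0"
    and irr: "irreducible E R" and "x \<in> E" "y \<in> E" "x \<noteq> y"
  shows "0 < hold_rate E R x"
proof -
  have "(x, y) \<in> {(u, v). u \<in> E \<and> v \<in> E \<and> u \<noteq> v \<and> R u v > 0}\<^sup>*"
    using irr assms(4,5) by (auto simp: irreducible_def)
  then obtain z where "z \<in> E - {x}" "0 < R x z"
    using \<open>x \<noteq> y\<close> by (auto elim: converse_rtranclE)
  moreover have "R x z \<le> hold_rate E R x"
    unfolding hold_rate_def using fin nonneg \<open>x \<in> E\<close> \<open>z \<in> E - {x}\<close> by (intro member_le_sum) auto
  ultimately show ?thesis by linarith
qed

lemma stationary_chain_reversible_rates: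
  assumes "stationary_chain E R \<mu>" and pos: "\<And>x. x \<in> E \<Longrightarrow> 0 < \<mu> x"
  shows "stationary_chain E (reversible_rates R \<mu>) \<mu>"
proof -
  interpret stationary_chain E R \<mu> by fact
  let ?Rs = "reversible_rates R \<mu>"
  have out: "(\<Sum>y\<in>E. flow \<mu> ?Rs x y) = \<mu> x * hold_rate E R x"
    and into: "(\<Sum>y\<in>E. flow \<mu> ?Rs y x) = \<mu> x * hold_rate E R x" if "x \<in> E" for x
  proof -
    have "(\<Sum>y\<in>E. flow \<mu> ?Rs x y) = (\<Sum>y\<in>E. (flow \<mu> R x y + flow \<mu> R y x) / 2)"
      by (rule sum.cong[OF refl]) (simp add: flow_reversible_rates pos that)
    moreover have "(\<Sum>y\<in>E. flow \<mu> ?Rs y x) = (\<Sum>y\<in>E. (flow \<mu> R x y + flow \<mu> R y x) / 2)"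
      by (rule sum.cong[OF refl]) (simp add: flow_reversible_rates pos add.commute)
    moreover have "(\<Sum>y\<in>E. (flow \<mu> R x y + flow \<mu> R y x) / 2) = \<mu> x * hold_rate E R x"
      using flow_balanced[OF that] sum_flow_out[OF finite_E, of \<mu> R x]
      by (simp add: sum.distrib sum_divide_distrib[symmetric])
    ultimately show "(\<Sum>y\<in>E. flow \<mu> ?Rs x y) = \<mu> x * hold_rate E R x"
      "(\<Sum>y\<in>E. flow \<mu> ?Rs y x) = \<mu> x * hold_rate E R x" by simp_all
  qed
  have hold: "hold_rate E ?Rs x = hold_rate E R x" if "x \<in> E" for x
    using out[OF that] sum_flow_out[OF finite_E, of \<mu> ?Rs x] pos[OF that] by simp
  show ?thesis
  proof
    show "0 \<le> ?Rs x y" if "x \<in> E" "y \<in> E" "x \<noteq> y" for x y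
      using that pos[of x] mu_nonneg[of y] rate_nonneg[of x y] rate_nonneg[of y x]
      by (simp add: reversible_rates_def)
    show "0 < hold_rate E ?Rs x" if "x \<in> E" for x
      using hold[OF that] hold_rate_pos[OF that] by simp
    show "(\<Sum>x\<in>E - {y}. \<mu> x * ?Rs x y) = \<mu> y * hold_rate E ?Rs y" if "y \<in> E" for y
      using into[OF that] hold[OF that] sum_flow_in[OF finite_E, of \<mu> ?Rs y] by simp
  qed (simp_all add: finite_E mu_nonneg)
qed

theorem corollary4p6:
  fixes E :: "'a set" and R :: "'a \<Rightarrow> 'a \<Rightarrow> real" and \<mu> :: "'a \<Rightarrow> real"
    and A B :: "'a set"
  assumes "finite E"
    and "\<forall>x\<in>E. \<forall>y\<in>E. x \<noteq> y \<longrightarrow> R x y \<ge> 0"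
    and "irreducible E R"
    and "invariant_prob E R \<mu>"
    and "A \<subseteq> E" and "B \<subseteq> E" and "A \<noteq> {}" and "B \<noteq> {}" and "A \<inter> B = {}"
  shows "capacity E (reversible_rates R \<mu>) \<mu> A B \<le> capacity E R \<mu> A B \<and>
         capacity E R \<mu> A B \<le> 2 * real (card E) * capacity E (reversible_rates R \<mu>) \<mu> A B"
proof -
  let ?Rs = "reversible_rates R \<mu>"
  have pos: "0 < \<mu> x" if "x \<in> E" for x
    using invariant_prob_pos[OF assms(1-4) that] .
  obtain a b where "a \<in> A" "b \<in> B" "a \<noteq> b" using assms(7-9) by blast
  have "0 < hold_rate E R x" if "x \<in> E" for x
    using hold_rate_pos_irreducible[OF assms(1-3) that] \<open>a \<in> A\<close> \<open>b \<in> B\<close> \<open>a \<noteq> b\<close> assms(5,6)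
    by (metis subsetD)
  then have "stationary_chain E R \<mu>"
    using assms(1,2,4) unfolding stationary_chain_def invariant_prob_def by blast
  then have "stationary_chain E ?Rs \<mu>"
    using stationary_chain_reversible_rates pos by blast
  then have chain: "capacity_problem E R \<mu> A B" and reversible: "capacity_problem E ?Rs \<mu> A B"
    using \<open>stationary_chain E R \<mu>\<close> assms(5,6,9)
    by (simp_all add: capacity_problem_def capacity_problem_axioms_def)
  have flow: "flow \<mu> ?Rs x y = (flow \<mu> R x y + flow \<mu> R y x) / 2" if "x \<in> E" "y \<in> E" for x y
    by (simp add: flow_reversible_rates pos that)
  show ?thesis
    using capacity_symmetrization_le[OF chain reversible flow]
      capacity_le_card_symmetrization[OF chain reversible flow assms(7,8)] by simp
qed

end
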